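(* Let $r\ge 2$, let $H$ be a digraph (possibly with loops), and let $D$ be an $H$-colored $r$-transitive digraph. For every $k \geq r$, $D$ has a $(k,H)$-kernel.
   Context: All digraphs are finite. A digraph $D$ is $r$-transitive if for all distinct $u,v\in V(D)$, whenever there is a directed $uv$-path of length $r$, the arc $(u,v)$ belongs to $A(D)$. $D$ has no loops and comes with a map $\rho: A(D)\to V(H)$. For a walk $W=(x_0,\ldots,x_n)$ in $D$, there is an obstruction on $x_i$ if $(\rho(x_{i-1},x_i),\rho(x_i,x_{i+1})) \notin A(H)$; for an open walk this is considered at internal vertices $x_i$, $1\le i\le n-1$, for a closed walk at all $i\in\{0,\ldots,n-1\}$ with indices modulo $n$. $O_H(W)$ is the set of indices with an obstruction; the $H$-length is $l_H(W)=|O_H(W)|+1$ for open $W$ and $|O_H(W)|$ for closed $W$. A $(k,H)$-kernel ($k\ge2$) is a set $S\subseteq V(D)$ such that for every two distinct $u,v\in S$ every directed $uv$-path in $D$ has $H$-length at least $k$, and for every $x\in V(D)\setminus S$ there is a directed path from $x$ to a vertex of $S$ of $H$-length at most $k-1$. *)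

theory Defs
  imports Main
begin

definition digraph :: "'a set \<Rightarrow> ('a \<times> 'a) set \<Rightarrow> bool" where
  "digraph V A \<longleftrightarrow> finite V \<and> A \<subseteq> V \<times> V"

definition loopless :: "('a \<times> 'a) set \<Rightarrow> bool" where
  "loopless A \<longleftrightarrow> (\<forall>x. (x, x) \<notin> A)"

text \<open>A directed walk (x_0,...,x_n) is represented by the nonempty list [x_0,...,x_n];
  its length is n.\<close>
definition is_walk :: "('a \<times> 'a) set \<Rightarrow> 'a list \<Rightarrow> bool" where
  "is_walk A W \<longleftrightarrow> W \<noteq> [] \<and> (\<forall>i < length W - 1. (W ! i, W ! Suc i) \<in> A)"

definition is_path :: "('a \<times> 'a) set \<Rightarrow> 'a list \<Rightarrow> bool" where
  "is_path A W \<longleftrightarrow> is_walk A W \<and> distinct W"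

definition uv_path :: "('a \<times> 'a) set \<Rightarrow> 'a \<Rightarrow> 'a \<Rightarrow> 'a list \<Rightarrow> bool" where
  "uv_path A u v W \<longleftrightarrow> is_path A W \<and> hd W = u \<and> last W = v"

definition r_transitive :: "('a \<times> 'a) set \<Rightarrow> nat \<Rightarrow> bool" where
  "r_transitive A r \<longleftrightarrow>
     (\<forall>u v W. u \<noteq> v \<and> uv_path A u v W \<and> length W - 1 = r \<longrightarrow> (u, v) \<in> A)"

definition H_colored :: "'a set \<Rightarrow> ('a \<times> 'a) set \<Rightarrow> 'c set \<Rightarrow> ('c \<times> 'c) set
    \<Rightarrow> ('a \<times> 'a \<Rightarrow> 'c) \<Rightarrow> bool" where
  "H_colored V A VH AH \<rho> \<longleftrightarrow> digraph V A \<and> loopless A \<and> digraph VH AH \<and> (\<forall>a\<in>A. \<rho> a \<in> VH)"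

definition obstructions_open :: "('c \<times> 'c) set \<Rightarrow> ('a \<times> 'a \<Rightarrow> 'c) \<Rightarrow> 'a list \<Rightarrow> nat set" where
  "obstructions_open AH \<rho> W =
     {i. 1 \<le> i \<and> i < length W - 1 \<and>
         (\<rho> (W ! (i - 1), W ! i), \<rho> (W ! i, W ! Suc i)) \<notin> AH}"

definition H_length_open :: "('c \<times> 'c) set \<Rightarrow> ('a \<times> 'a \<Rightarrow> 'c) \<Rightarrow> 'a list \<Rightarrow> nat" where
  "H_length_open AH \<rho> W = card (obstructions_open AH \<rho> W) + 1"

definition kH_kernel :: "'a set \<Rightarrow> ('a \<times> 'a) set \<Rightarrow> ('c \<times> 'c) set \<Rightarrow> ('a \<times> 'a \<Rightarrow> 'c)
    \<Rightarrow> nat \<Rightarrow> 'a set \<Rightarrow> bool" where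
  "kH_kernel V A AH \<rho> k S \<longleftrightarrow>
     S \<subseteq> V \<and>
     (\<forall>u\<in>S. \<forall>v\<in>S. u \<noteq> v \<longrightarrow> (\<forall>W. uv_path A u v W \<longrightarrow> H_length_open AH \<rho> W \<ge> k)) \<and>
     (\<forall>x\<in>V - S. \<exists>s\<in>S. \<exists>W. uv_path A x s W \<and> H_length_open AH \<rho> W \<le> k - 1)"

end

theory Submission
  imports Defs
begin

text \<open>Pick one vertex in every terminal strong component of D. No directed path joins two
  distinct chosen vertices, so the independence condition holds vacuously, and every vertex
  reaches a chosen one. In an r-transitive digraph, whenever y \<noteq> x is reachable from x
  there is an xy-path with at most r - 1 arcs, and the H-length of a path never exceeds its
  number of arcs; hence the chosen set absorbs within H-length r - 1 \<le> k - 1.\<close>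

lemma is_walk_iff_successively:
  "is_walk A W \<longleftrightarrow> W \<noteq> [] \<and> successively (\<lambda>x y. (x, y) \<in> A) W"
  by (auto simp: is_walk_def successively_conv_nth)

lemma is_walk_rtrancl:
  assumes "is_walk A W"
  shows "(hd W, last W) \<in> A\<^sup>*"
  using assms unfolding is_walk_iff_successively
  by (induction W rule: induct_list012) (auto intro: converse_rtrancl_into_rtrancl)

lemma is_path_arc:
  assumes "(x, y) \<in> A" "x \<noteq> y"
  shows "is_path A [x, y]"
  using assms by (simp add: is_path_def is_walk_iff_successively)

lemma is_path_snoc:
  assumes "is_path A W" "(last W, z) \<in> A" "z \<notin> set W"
  shows "is_path A (W @ [z])"
  using assms by (auto simp: is_path_def is_walk_iff_successively successively_append_iff)

lemma is_path_prefix: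
  assumes "is_path A (xs @ ys)" "xs \<noteq> []"
  shows "is_path A xs"
  using assms by (simp add: is_path_def is_walk_iff_successively successively_append_iff)

lemma uv_path_length_ge_2:
  assumes "uv_path A u v W" "u \<noteq> v"
  shows "2 \<le> length W"
  using assms unfolding uv_path_def is_path_def is_walk_def
  by (cases W) (auto simp: Suc_le_eq split: if_splits)

lemma r_transitive_short_path:
  assumes "r_transitive A r" "2 \<le> r" "(x, y) \<in> A\<^sup>*" "x \<noteq> y"
  shows "\<exists>W. uv_path A x y W \<and> length W \<le> r"
  using assms(3,4)
proof (induction rule: rtrancl_induct)
  case base
  then show ?case by simp
next
  case (step y z)
  have arc_path: "\<exists>W. uv_path A x z W \<and> length W \<le> r" if "(x, z) \<in> A"
  proof -
    have "uv_path A x z [x, z]" using that \<open>x \<noteq> z\<close> is_path_arc by (simp add: uv_path_def)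
    then show ?thesis using assms(2) by force
  qed
  show ?case
  proof (cases "x = y")
    case True
    then show ?thesis using step.hyps(2) arc_path by simp
  next
    case False
    then obtain W where W: "uv_path A x y W" "length W \<le> r" using step.IH by blast
    then have "W \<noteq> []" by (simp add: uv_path_def is_path_def is_walk_def)
    show ?thesis
    proof (cases "z \<in> set W")
      case True
      then obtain xs ys where W_split: "W = (xs @ [z]) @ ys" by (auto dest: split_list)
      have "is_path A (xs @ [z])"
        using W(1) is_path_prefix[of A "xs @ [z]" ys] by (simp add: W_split uv_path_def)
      moreover have "hd (xs @ [z]) = x" using W(1) W_split by (cases xs) (simp_all add: uv_path_def)
      ultimately have "uv_path A x z (xs @ [z])" by (simp add: uv_path_def)
      then show ?thesis using W(2) W_split by (intro exI[of _ "xs @ [z]"]) simp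
    next
      case False
      then have path: "uv_path A x z (W @ [z])"
        using W(1) step.hyps(2) \<open>W \<noteq> []\<close> is_path_snoc[of A W z] by (simp add: uv_path_def)
      show ?thesis
      proof (cases "length W < r")
        case True
        then show ?thesis using path by (intro exI[of _ "W @ [z]"]) simp
      next
        case False
        then have "length (W @ [z]) - 1 = r" using W(2) by simp
        then have "(x, z) \<in> A"
          using assms(1) path \<open>x \<noteq> z\<close> unfolding r_transitive_def by blast
        then show ?thesis by (rule arc_path)
      qed
    qed
  qed
qed

lemma H_length_open_le_arcs:
  assumes "2 \<le> length W"
  shows "H_length_open AH \<rho> W \<le> length W - 1"
proof -
  have "card (obstructions_open AH \<rho> W) \<le> card {1..<length W - 1}"
    by (rule card_mono) (auto simp: obstructions_open_def)
  then show ?thesis unfolding H_length_open_def using assms by simp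
qed

definition terminal_vertex :: "('a \<times> 'a) set \<Rightarrow> 'a \<Rightarrow> bool" where
  "terminal_vertex A y \<longleftrightarrow> (\<forall>z. (y, z) \<in> A\<^sup>* \<longrightarrow> (z, y) \<in> A\<^sup>*)"

lemma reaches_terminal_vertex:
  assumes "finite A"
  shows "\<exists>y. (x, y) \<in> A\<^sup>* \<and> terminal_vertex A y"
proof (induction "card (A\<^sup>* `` {x})" arbitrary: x rule: less_induct)
  case less
  show ?case
  proof (cases "terminal_vertex A x")
    case True
    then show ?thesis by blast
  next
    case False
    then obtain y where y: "(x, y) \<in> A\<^sup>*" "(y, x) \<notin> A\<^sup>*"
      unfolding terminal_vertex_def by blast
    then have "A\<^sup>* `` {y} \<subset> A\<^sup>* `` {x}" by (auto intro: rtrancl_trans)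
    then have "card (A\<^sup>* `` {y}) < card (A\<^sup>* `` {x})"
      using assms by (simp add: psubset_card_mono)
    then show ?thesis using less y(1) by (meson rtrancl_trans)
  qed
qed

lemma obtain_reachability_kernel:
  assumes "finite V" "A \<subseteq> V \<times> V"
  obtains S where "S \<subseteq> V"
    and "\<And>u v. u \<in> S \<Longrightarrow> v \<in> S \<Longrightarrow> (u, v) \<in> A\<^sup>* \<Longrightarrow> u = v"
    and "\<And>x. x \<in> V \<Longrightarrow> \<exists>s\<in>S. (x, s) \<in> A\<^sup>*"
proof -
  define rep where "rep y = (SOME s. (y, s) \<in> A\<^sup>* \<and> (s, y) \<in> A\<^sup>*)" for y
  define S where "S = rep ` {y \<in> V. terminal_vertex A y}"
  have rep: "(y, rep y) \<in> A\<^sup>*" "(rep y, y) \<in> A\<^sup>*" for y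
    using someI[of "\<lambda>s. (y, s) \<in> A\<^sup>* \<and> (s, y) \<in> A\<^sup>*" y] by (simp_all add: rep_def)
  have rep_cong: "rep y = rep y'" if "(y, y') \<in> A\<^sup>*" "(y', y) \<in> A\<^sup>*" for y y'
  proof -
    have "(\<lambda>s. (y, s) \<in> A\<^sup>* \<and> (s, y) \<in> A\<^sup>*) = (\<lambda>s. (y', s) \<in> A\<^sup>* \<and> (s, y') \<in> A\<^sup>*)"
      using that by (blast intro: rtrancl_trans)
    then show ?thesis by (simp add: rep_def)
  qed
  have closed: "z \<in> V" if "(y, z) \<in> A\<^sup>*" "y \<in> V" for y z
    using that assms(2) by (induction rule: rtrancl_induct) auto
  have "S \<subseteq> V" unfolding S_def using rep(1) closed by blast
  moreover have "u = v" if "u \<in> S" "v \<in> S" "(u, v) \<in> A\<^sup>*" for u v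
  proof -
    obtain y y' where y: "terminal_vertex A y" "u = rep y" "v = rep y'"
      using \<open>u \<in> S\<close> \<open>v \<in> S\<close> by (auto simp: S_def)
    have "(y, y') \<in> A\<^sup>*" using y rep \<open>(u, v) \<in> A\<^sup>*\<close> by (blast intro: rtrancl_trans)
    moreover have "(y', y) \<in> A\<^sup>*" using calculation y(1) unfolding terminal_vertex_def by blast
    ultimately have "rep y = rep y'" by (rule rep_cong)
    with y show ?thesis by simp
  qed
  moreover have "\<exists>s\<in>S. (x, s) \<in> A\<^sup>*" if "x \<in> V" for x
  proof -
    have "finite A" using finite_subset[OF assms(2)] assms(1) by simp
    then obtain y where "(x, y) \<in> A\<^sup>*" "terminal_vertex A y"
      using reaches_terminal_vertex[of A x] by blast
    moreover have "y \<in> V" using calculation(1) that closed by blast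
    ultimately show ?thesis using rep(1)[of y] unfolding S_def by (blast intro: rtrancl_trans)
  qed
  ultimately show thesis by (rule that)
qed

theorem corollary12:
  fixes V :: "'a set" and A :: "('a \<times> 'a) set"
    and VH :: "'c set" and AH :: "('c \<times> 'c) set"
    and \<rho> :: "'a \<times> 'a \<Rightarrow> 'c" and r k :: nat
  assumes "r \<ge> 2"
    and "H_colored V A VH AH \<rho>"
    and "r_transitive A r"
    and "k \<ge> r"
  shows "\<exists>S. kH_kernel V A AH \<rho> k S"
proof -
  have "finite V" "A \<subseteq> V \<times> V"
    using assms(2) by (auto simp: H_colored_def digraph_def)
  from obtain_reachability_kernel[OF this] obtain S where S: "S \<subseteq> V"
    and indep: "\<And>u v. u \<in> S \<Longrightarrow> v \<in> S \<Longrightarrow> (u, v) \<in> A\<^sup>* \<Longrightarrow> u = v"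
    and absorb: "\<And>x. x \<in> V \<Longrightarrow> \<exists>s\<in>S. (x, s) \<in> A\<^sup>*"
    by blast
  have no_path: "\<not> uv_path A u v W" if "u \<in> S" "v \<in> S" "u \<noteq> v" for u v W
    using that indep is_walk_rtrancl[of A W] by (auto simp: uv_path_def is_path_def)
  have short_path: "\<exists>s\<in>S. \<exists>W. uv_path A x s W \<and> H_length_open AH \<rho> W \<le> k - 1"
    if x: "x \<in> V - S" for x
  proof -
    obtain s where s: "s \<in> S" "(x, s) \<in> A\<^sup>*" using absorb x by blast
    have "x \<noteq> s" using x s(1) by blast
    obtain W where W: "uv_path A x s W" "length W \<le> r"
      using r_transitive_short_path[OF assms(3,1) s(2) \<open>x \<noteq> s\<close>] by blast
    have "H_length_open AH \<rho> W \<le> length W - 1"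
      using uv_path_length_ge_2[OF W(1) \<open>x \<noteq> s\<close>] by (rule H_length_open_le_arcs)
    then have "H_length_open AH \<rho> W \<le> k - 1"
      using W(2) assms(4) by linarith
    then show ?thesis using s(1) W(1) by blast
  qed
  have "kH_kernel V A AH \<rho> k S"
    unfolding kH_kernel_def using S no_path short_path by auto
  then show ?thesis ..
qed

end
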